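(* With $A_2[n]$ defined below, for $n=1,2,\dots$, $$A_2[n]=\frac{n+1}{128}\binom{3n+1}{n}\Bigl(\frac{168n^3+846n^2+1211n+510}{5}-3(n+1)(25n+34)\,F(1,-n;2n+2;-2)\Bigr),$$ where $F(a,b;c;z)$ is the Gauss hypergeometric function.
   Context: $A_0(z)$ is the unique function holomorphic near $z=0$ with $A_0(0)=0$ and $z(1+A_0(z))^3=A_0(z)$, and $$A_2(z)=A_0(z)\frac{(1+A_0(z))^6}{(1-2A_0(z))^9}\bigl(1+36A_0(z)+135A_0^2(z)+19A_0^3(z)\bigr).$$ The numbers $A_2[n]$ are defined by $A_2(z)=\sum_{n\ge1}A_2[n]z^n$. *)

theory Defs
  imports Complex_Main "HOL-Computational_Algebra.Formal_Power_Series"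
begin

text \<open>A_0 as a formal power series: the unique series with zero constant term
  satisfying z (1 + A_0)^3 = A_0.  Its coefficients are the Taylor coefficients
  of the holomorphic function A_0(z) at 0.\<close>
definition A0 :: "real fps" where
  "A0 = (THE A. fps_nth A 0 = 0 \<and> fps_X * (1 + A) ^ 3 = A)"

definition A2 :: "real fps" where
  "A2 = A0 * (1 + A0) ^ 6 * inverse ((1 - 2 * A0) ^ 9)
          * (1 + 36 * A0 + 135 * A0 ^ 2 + 19 * A0 ^ 3)"

definition gauss_F :: "real \<Rightarrow> real \<Rightarrow> real \<Rightarrow> real \<Rightarrow> real" where
  "gauss_F a b c z = (\<Sum>k. pochhammer a k * pochhammer b k / pochhammer c k
                            * z ^ k / fact k)"

end

theory Submission
  imports Defs
begin

(* A0 is the compositional inverse of z / (1 + z)^3, so Lagrange inversion gives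
   [z^n] G(A0) = [x^n] G(x) (1 + x)^(3n) (1 - 2x) / (1 + x).  For T = (1 + A0)^2 / (1 - 2 A0) and
   U = (1 + A0)^2 / (1 - 2 A0)^2 this yields [z^n] T = C(3n+1, n) and
   [z^n] U = sum_(i<=n) C(3n+1, i) 2^(n-i) = C(3n+1, n) F(1, -n; 2n+2; -2).
   The Euler operator theta = z d/dz maps A0 to A0 (1 + A0) / (1 - 2 A0), so theta^j T and
   theta^j U are rational in A0, and 640 A2 turns out to be a fixed linear combination of them;
   since [z^n] theta^j F = n^j [z^n] F, the formula follows. *)

unbundle fps_syntax

lemma fps_X_mult_fps_shift_1: "fps_X * fps_shift 1 f = f - fps_const (f $ 0 :: 'a::comm_ring_1)"
  by (intro fps_ext) auto

lemma lagrange_inversion_diagonal: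
  fixes \<phi> :: "'a::field_char_0 fps"
  assumes "\<phi> $ 0 \<noteq> 0" "n \<ge> 1"
  shows "(\<phi> ^ n * (1 - fps_X * fps_deriv \<phi> * inverse \<phi>)) $ n = 0"
proof -
  obtain m where n: "n = Suc m"
    using assms(2) by (cases n) auto
  let ?W = "1 - fps_X * fps_deriv \<phi> * inverse \<phi>"
  have "\<phi> ^ n * ?W = \<phi> ^ n - fps_X * (fps_deriv \<phi> * \<phi> ^ m) * (\<phi> * inverse \<phi>)"
    by (simp add: n algebra_simps)
  also have "\<dots> = \<phi> ^ n - fps_X * (fps_deriv \<phi> * \<phi> ^ m)"
    using assms(1) by (simp add: inverse_mult_eq_1')
  finally have W: "\<phi> ^ n * ?W = \<phi> ^ n - fps_X * (fps_deriv \<phi> * \<phi> ^ m)" .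
  have "of_nat n * (fps_deriv \<phi> * \<phi> ^ m) $ m = fps_deriv (\<phi> ^ n) $ m"
    by (simp add: n fps_deriv_power mult.assoc del: power_Suc)
  also have "\<dots> = of_nat n * (\<phi> ^ n) $ n"
    by (simp only: n fps_deriv_nth Suc_eq_plus1)
  finally have "(fps_deriv \<phi> * \<phi> ^ m) $ m = (\<phi> ^ n) $ n"
    using assms(2) by simp
  then show ?thesis
    unfolding W by (simp add: n del: power_Suc)
qed

(* Induction on n for all G at once: writing G = G(0) + X H, the equation for B turns
   (X H) oo B into X ((\<phi> H) oo B), and the constant G(0) contributes only the vanishing
   diagonal coefficient. *)
theorem lagrange_inversion:
  fixes \<phi> B G :: "'a::field_char_0 fps"
  assumes \<phi>0: "\<phi> $ 0 \<noteq> 0" and B0: "B $ 0 = 0" and B: "fps_X * (\<phi> oo B) = B"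
  shows "(G oo B) $ n = (G * \<phi> ^ n * (1 - fps_X * fps_deriv \<phi> * inverse \<phi>)) $ n"
proof (induction n arbitrary: G)
  case 0
  then show ?case by simp
next
  case (Suc n)
  let ?W = "1 - fps_X * fps_deriv \<phi> * inverse \<phi>"
  define H where "H = fps_shift 1 G"
  have GH: "G - fps_const (G $ 0) = fps_X * H"
    unfolding H_def fps_X_mult_fps_shift_1 ..
  then have G: "G = fps_const (G $ 0) + fps_X * H"
    by (simp add: algebra_simps)
  have "(fps_X * H) oo B = B * (H oo B)"
    by (simp add: fps_compose_mult_distrib[OF B0] B0)
  also have "\<dots> = fps_X * ((\<phi> * H) oo B)"
    by (subst (1) B[symmetric]) (simp add: fps_compose_mult_distrib[OF B0] mult_ac)
  finally have "(G oo B) $ Suc n = ((\<phi> * H) oo B) $ n"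
    by (subst G) (simp add: fps_compose_add_distrib)
  also have "\<dots> = (\<phi> * H * \<phi> ^ n * ?W) $ n"
    by (rule Suc.IH)
  also have "\<dots> = ((G - fps_const (G $ 0)) * \<phi> ^ Suc n * ?W) $ Suc n"
    unfolding GH by (simp add: mult_ac)
  also have "\<dots> = (G * \<phi> ^ Suc n * ?W) $ Suc n - G $ 0 * (\<phi> ^ Suc n * ?W) $ Suc n"
    by (simp only: left_diff_distrib fps_sub_nth fps_mult_left_const_nth mult.assoc)
  also have "\<dots> = (G * \<phi> ^ Suc n * ?W) $ Suc n"
    using lagrange_inversion_diagonal[OF \<phi>0, of "Suc n"] by simp
  finally show ?case .
qed

lemma fps_X_inverse_compose:
  fixes \<phi> B :: "'a::field fps"
  assumes \<phi>0: "\<phi> $ 0 \<noteq> 0" and B0: "B $ 0 = 0"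
  shows "(fps_X * inverse \<phi>) oo B = B * inverse (\<phi> oo B)"
  by (simp only: fps_compose_mult_distrib[OF B0] fps_X_fps_compose_startby0[OF B0]
      fps_inverse_compose[OF B0 \<phi>0])

lemma lagrange_equation_iff_fps_inv:
  fixes \<phi> B :: "'a::field fps"
  assumes \<phi>0: "\<phi> $ 0 \<noteq> 0"
  shows "B $ 0 = 0 \<and> fps_X * (\<phi> oo B) = B \<longleftrightarrow> B = fps_inv (fps_X * inverse \<phi>)"
proof -
  let ?f = "fps_X * inverse \<phi>"
  have f0: "?f $ 0 = 0" and f1: "?f $ 1 \<noteq> 0"
    using \<phi>0 by simp_all
  have compose_eq_X: "fps_X * (\<phi> oo B) = B \<longleftrightarrow> ?f oo B = fps_X" if B0: "B $ 0 = 0" for B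
  proof -
    let ?P = "\<phi> oo B"
    have "?P $ 0 \<noteq> 0"
      using \<phi>0 B0 by simp
    then have unit: "?P * inverse ?P = 1" "inverse ?P * ?P = 1"
      by (simp_all add: inverse_mult_eq_1' inverse_mult_eq_1)
    have "fps_X * ?P = B \<longleftrightarrow> B * inverse ?P = fps_X"
    proof
      assume h: "fps_X * ?P = B"
      have "B * inverse ?P = fps_X * ?P * inverse ?P"
        by (simp only: h)
      then show "B * inverse ?P = fps_X"
        using unit(1) by (simp add: mult.assoc)
    next
      assume h: "B * inverse ?P = fps_X"
      have "fps_X * ?P = B * inverse ?P * ?P"
        by (simp only: h)
      then show "fps_X * ?P = B"
        using unit(2) by (simp add: mult.assoc)
    qed
    then show ?thesis
      unfolding fps_X_inverse_compose[OF \<phi>0 B0] .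
  qed
  show ?thesis
  proof
    assume "B $ 0 = 0 \<and> fps_X * (\<phi> oo B) = B"
    then have B0: "B $ 0 = 0" and B: "fps_X * (\<phi> oo B) = B"
      by simp_all
    then have "?f oo B = fps_X"
      using compose_eq_X by simp
    then have "fps_inv ?f = fps_inv ?f oo (?f oo B)"
      by simp
    also have "\<dots> = (fps_inv ?f oo ?f) oo B"
      using B0 f0 by (rule fps_compose_assoc)
    also have "\<dots> = B"
      using B0 by (simp only: fps_inv[OF f0 f1] fps_X_fps_compose_startby0)
    finally show "B = fps_inv ?f" ..
  next
    assume B: "B = fps_inv ?f"
    then have B0: "B $ 0 = 0"
      by (simp add: fps_inv_def)
    moreover have "fps_X * (\<phi> oo B) = B"
      using compose_eq_X[OF B0] fps_inv_right[OF f0 f1] B by simp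
    ultimately show "B $ 0 = 0 \<and> fps_X * (\<phi> oo B) = B" ..
  qed
qed

lemma A0_equation_iff:
  "A $ 0 = 0 \<and> fps_X * (1 + A) ^ 3 = A \<longleftrightarrow> A = fps_inv (fps_X * inverse ((1 + fps_X) ^ 3))"
proof (cases "A $ 0 = 0")
  case True
  then have "(1 + fps_X) ^ 3 oo A = (1 + A) ^ 3"
    by (simp add: fps_compose_power[symmetric] fps_compose_add_distrib)
  then show ?thesis
    using lagrange_equation_iff_fps_inv[of "(1 + fps_X) ^ 3" A] by simp
next
  case False
  then show ?thesis
    using lagrange_equation_iff_fps_inv[of "(1 + fps_X) ^ 3" A] by simp
qed

lemma A0_eq_fps_inv: "A0 = fps_inv (fps_X * inverse ((1 + fps_X) ^ 3))"
  unfolding A0_def A0_equation_iff by simp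

lemma A0_nth_0: "A0 $ 0 = 0"
  and A0_equation: "fps_X * (1 + A0) ^ 3 = A0"
  using A0_equation_iff[of A0] A0_eq_fps_inv by simp_all

lemma fps_compose_A0_nth:
  "(G oo A0) $ n = (G * (1 + fps_X) ^ (3 * n) * (1 - 2 * fps_X) * inverse (1 + fps_X)) $ n"
proof -
  let ?\<phi> = "(1 + fps_X :: real fps) ^ 3"
  have "fps_X * (?\<phi> oo A0) = A0"
    using A0_equation A0_nth_0
    by (simp add: fps_compose_power[symmetric] fps_compose_add_distrib)
  then have "(G oo A0) $ n = (G * ?\<phi> ^ n * (1 - fps_X * fps_deriv ?\<phi> * inverse ?\<phi>)) $ n"
    by (intro lagrange_inversion) (simp_all add: A0_nth_0)
  moreover have "1 - fps_X * fps_deriv ?\<phi> * inverse ?\<phi> = (1 - 2 * fps_X) * inverse (1 + fps_X)"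
  proof -
    have "fps_deriv ?\<phi> = 3 * (1 + fps_X) ^ 2"
      by (simp add: fps_deriv_power')
    moreover have "inverse ?\<phi> = inverse (1 + fps_X) ^ 3"
      by (simp add: fps_inverse_power)
    moreover have "(1 + fps_X) * inverse (1 + fps_X :: real fps) = 1"
      by (simp add: inverse_mult_eq_1')
    ultimately show ?thesis
      by algebra
  qed
  moreover have "?\<phi> ^ n = (1 + fps_X) ^ (3 * n)"
    by (simp add: power_mult)
  ultimately show ?thesis
    by (simp only: mult.assoc)
qed

lemma fps_XD_diff [simp]: "fps_XD (a - b) = fps_XD a - fps_XD (b :: 'a::comm_ring_1 fps)"
  by (simp add: fps_XD_def algebra_simps)

lemma fps_XD_mult [simp]: "fps_XD (a * b) = fps_XD a * b + a * fps_XD (b :: 'a::comm_ring_1 fps)"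
  by (simp add: fps_XD_def algebra_simps)

lemma fps_XD_power [simp]:
  "fps_XD (a ^ n) = of_nat n * a ^ (n - 1) * fps_XD (a :: 'a::comm_ring_1 fps)"
  by (simp add: fps_XD_def fps_deriv_power' algebra_simps)

lemma fps_XD_numeral [simp]: "fps_XD (numeral k :: 'a::comm_ring_1 fps) = 0"
  by (simp add: fps_XD_def numeral_fps_const)

lemma fps_XD_one [simp]: "fps_XD (1 :: 'a::comm_ring_1 fps) = 0"
  by (simp add: fps_XD_def)

lemma fps_XD_fps_X [simp]: "fps_XD (fps_X :: 'a::comm_ring_1 fps) = fps_X"
  by (simp add: fps_XD_def)

lemma fps_XD_inverse:
  fixes a :: "'a::field fps"
  assumes "a $ 0 \<noteq> 0"
  shows "fps_XD (inverse a) = - fps_XD a * inverse a ^ 2"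
  using assms by (simp add: fps_XD_def fps_inverse_deriv)

(* Both sides are polynomials in a and i = 1 / (1 - 2 a), so this is a polynomial identity
   modulo (1 - 2 a) i = 1. *)
lemma Euler_operator_identity:
  fixes a i :: "real fps"
  assumes "(1 - 2 * a) * i = 1" "fps_XD a = a * (1 + a) * i" "fps_XD i = 2 * a * (1 + a) * i ^ 3"
  shows "640 * (a * (1 + a) ^ 6 * i ^ 9 * (1 + 36 * a + 135 * a ^ 2 + 19 * a ^ 3)) =
     510 * ((1 + a) ^ 2 * i) + 1721 * fps_XD ((1 + a) ^ 2 * i)
       + 2057 * fps_XD (fps_XD ((1 + a) ^ 2 * i))
       + 1014 * fps_XD (fps_XD (fps_XD ((1 + a) ^ 2 * i)))
       + 168 * fps_XD (fps_XD (fps_XD (fps_XD ((1 + a) ^ 2 * i))))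
     - 510 * ((1 + a) ^ 2 * i ^ 2) - 1395 * fps_XD ((1 + a) ^ 2 * i ^ 2)
       - 1260 * fps_XD (fps_XD ((1 + a) ^ 2 * i ^ 2))
       - 375 * fps_XD (fps_XD (fps_XD ((1 + a) ^ 2 * i ^ 2)))"
  using assms(1) by (simp add: assms(2,3)) algebra

lemma fps_XD_A0: "fps_XD A0 = A0 * (1 + A0) * inverse (1 - 2 * A0)"
proof -
  have "fps_XD A0 = fps_XD (fps_X * (1 + A0) ^ 3)"
    by (simp only: A0_equation)
  also have "\<dots> = fps_X * (1 + A0) ^ 3 + 3 * fps_X * (1 + A0) ^ 2 * fps_XD A0"
    by (simp add: algebra_simps)
  finally have "fps_XD A0 = A0 + 3 * fps_X * (1 + A0) ^ 2 * fps_XD A0"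
    by (simp only: A0_equation)
  then have key: "fps_XD A0 * (1 - 2 * A0) = A0 * (1 + A0)"
    using A0_equation by algebra
  have "(1 - 2 * A0) * inverse (1 - 2 * A0) = 1"
    by (simp add: inverse_mult_eq_1' A0_nth_0)
  then have "fps_XD A0 = fps_XD A0 * (1 - 2 * A0) * inverse (1 - 2 * A0)"
    by (simp add: mult.assoc)
  then show ?thesis
    by (simp only: key)
qed

lemma fps_XD_inverse_1_minus_2A0:
  "fps_XD (inverse (1 - 2 * A0)) = 2 * A0 * (1 + A0) * inverse (1 - 2 * A0) ^ 3"
  by (simp add: fps_XD_inverse A0_nth_0 fps_XD_A0 power2_eq_square power3_eq_cube)

definition binom_series :: "real fps" where
  "binom_series = (1 + A0) ^ 2 * inverse (1 - 2 * A0)"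

definition binom_sum_series :: "real fps" where
  "binom_sum_series = (1 + A0) ^ 2 * inverse (1 - 2 * A0) ^ 2"

lemma A2_Euler_expansion:
  "640 * A2 = 510 * binom_series + 1721 * fps_XD binom_series
      + 2057 * (fps_XD ^^ 2) binom_series + 1014 * (fps_XD ^^ 3) binom_series
      + 168 * (fps_XD ^^ 4) binom_series
    - 510 * binom_sum_series - 1395 * fps_XD binom_sum_series
      - 1260 * (fps_XD ^^ 2) binom_sum_series - 375 * (fps_XD ^^ 3) binom_sum_series"
proof -
  have iterates: "(fps_XD ^^ 2) F = fps_XD (fps_XD F)"
    "(fps_XD ^^ 3) F = fps_XD (fps_XD (fps_XD F))"
    "(fps_XD ^^ 4) F = fps_XD (fps_XD (fps_XD (fps_XD F)))" for F :: "real fps"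
    by (simp_all add: eval_nat_numeral)
  have "(1 - 2 * A0) * inverse (1 - 2 * A0) = 1"
    by (simp add: inverse_mult_eq_1' A0_nth_0)
  from Euler_operator_identity[OF this fps_XD_A0 fps_XD_inverse_1_minus_2A0] show ?thesis
    unfolding A2_def binom_series_def binom_sum_series_def fps_inverse_power iterates
    by (simp only: mult.assoc)
qed

lemma fps_numeral_mult_nth: "(numeral k * F :: 'a::comm_semiring_1 fps) $ n = numeral k * F $ n"
  by (simp add: numeral_fps_const)

lemma fps_one_plus_X_power_nth:
  "((1 + fps_X :: 'a::field_char_0 fps) ^ m) $ k = of_nat (m choose k)"
  by (subst fps_binomial_of_nat[symmetric]) (simp add: binomial_gbinomial)

lemma binom_series_compose: "binom_series = ((1 + fps_X) ^ 2 * inverse (1 - 2 * fps_X)) oo A0"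
  and binom_sum_series_compose:
    "binom_sum_series = ((1 + fps_X) ^ 2 * inverse (1 - 2 * fps_X) ^ 2) oo A0"
proof -
  have "(1 + fps_X) oo A0 = 1 + A0"
    by (simp add: fps_compose_add_distrib A0_nth_0)
  moreover have "(1 - 2 * fps_X) oo A0 = 1 - 2 * A0"
    by (simp add: fps_compose_sub_distrib fps_compose_mult_distrib[OF A0_nth_0] numeral_fps_const
        A0_nth_0)
  moreover have "(1 - 2 * fps_X :: real fps) $ 0 \<noteq> 0"
    by simp
  ultimately show "binom_series = ((1 + fps_X) ^ 2 * inverse (1 - 2 * fps_X)) oo A0"
    and "binom_sum_series = ((1 + fps_X) ^ 2 * inverse (1 - 2 * fps_X) ^ 2) oo A0"
    by (simp_all add: binom_series_def binom_sum_series_def fps_compose_mult_distrib[OF A0_nth_0]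
        fps_compose_power[OF A0_nth_0, symmetric] fps_inverse_compose[OF A0_nth_0])
qed

lemma binom_series_nth: "binom_series $ n = real ((3 * n + 1) choose n)"
proof -
  have "(1 + fps_X) * inverse (1 + fps_X :: real fps) = 1"
    and "(1 - 2 * fps_X) * inverse (1 - 2 * fps_X :: real fps) = 1"
    by (simp_all add: inverse_mult_eq_1')
  then have cancel: "(1 + fps_X) ^ 2 * inverse (1 - 2 * fps_X) * P * (1 - 2 * fps_X)
      * inverse (1 + fps_X) = P * (1 + fps_X)" for P :: "real fps"
    by algebra
  have "binom_series $ n = ((1 + fps_X) ^ 2 * inverse (1 - 2 * fps_X) * (1 + fps_X) ^ (3 * n)
      * (1 - 2 * fps_X) * inverse (1 + fps_X)) $ n"
    by (simp only: binom_series_compose fps_compose_A0_nth)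
  also have "\<dots> = ((1 + fps_X) ^ Suc (3 * n)) $ n"
    by (simp only: cancel power_Suc2)
  finally show ?thesis
    by (simp only: fps_one_plus_X_power_nth Suc_eq_plus1)
qed

lemma fps_inverse_1_minus_2X: "inverse (1 - 2 * fps_X :: real fps) = Abs_fps (\<lambda>k. 2 ^ k)"
proof (rule fps_inverse_unique)
  show "(1 - 2 * fps_X) * Abs_fps (\<lambda>k. 2 ^ k) = (1 :: real fps)"
  proof (rule fps_ext)
    show "((1 - 2 * fps_X) * Abs_fps (\<lambda>k. 2 ^ k)) $ k = (1 :: real fps) $ k" for k
      by (cases k) (simp_all add: algebra_simps fps_numeral_mult_nth)
  qed
qed

lemma binom_sum_series_nth:
  "binom_sum_series $ n = (\<Sum>i = 0..n. real ((3 * n + 1) choose i) * 2 ^ (n - i))"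
proof -
  have "(1 + fps_X) * inverse (1 + fps_X :: real fps) = 1"
    and "(1 - 2 * fps_X) * inverse (1 - 2 * fps_X :: real fps) = 1"
    by (simp_all add: inverse_mult_eq_1')
  then have cancel: "(1 + fps_X) ^ 2 * inverse (1 - 2 * fps_X) ^ 2 * P * (1 - 2 * fps_X)
      * inverse (1 + fps_X) = P * (1 + fps_X) * inverse (1 - 2 * fps_X)" for P :: "real fps"
    by algebra
  have "binom_sum_series $ n = ((1 + fps_X) ^ 2 * inverse (1 - 2 * fps_X) ^ 2
      * (1 + fps_X) ^ (3 * n) * (1 - 2 * fps_X) * inverse (1 + fps_X)) $ n"
    by (simp only: binom_sum_series_compose fps_compose_A0_nth)
  also have "\<dots> = ((1 + fps_X) ^ Suc (3 * n) * inverse (1 - 2 * fps_X)) $ n"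
    by (simp only: cancel power_Suc2)
  finally show ?thesis
    by (simp only: fps_mult_nth fps_one_plus_X_power_nth fps_inverse_1_minus_2X fps_nth_Abs_fps
        Suc_eq_plus1)
qed

lemma A2_nth:
  "640 * A2 $ n = real ((3 * n + 1) choose n)
        * (510 + 1721 * real n + 2057 * real n ^ 2 + 1014 * real n ^ 3 + 168 * real n ^ 4)
      - (\<Sum>i = 0..n. real ((3 * n + 1) choose i) * 2 ^ (n - i))
        * (510 + 1395 * real n + 1260 * real n ^ 2 + 375 * real n ^ 3)"
proof -
  have "(640 * A2) $ n = binom_series $ n
        * (510 + 1721 * real n + 2057 * real n ^ 2 + 1014 * real n ^ 3 + 168 * real n ^ 4)
      - binom_sum_series $ n * (510 + 1395 * real n + 1260 * real n ^ 2 + 375 * real n ^ 3)"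
    unfolding A2_Euler_expansion fps_add_nth fps_sub_nth fps_numeral_mult_nth fps_XD_nth
      fps_mult_fps_XD_shift fps_nth_Abs_fps
    by (simp add: algebra_simps)
  then show ?thesis
    by (simp add: fps_numeral_mult_nth binom_series_nth binom_sum_series_nth)
qed

lemma fact_add_pochhammer:
  "fact (a + k) = (fact a * pochhammer (of_nat a + 1) k :: 'a::{semiring_char_0,comm_semiring_1})"
  using pochhammer_product'[of 1 a k] by (simp add: pochhammer_fact add.commute)

lemma hypergeometric_term_binomial:
  assumes "k \<le> n"
  shows "real ((3 * n + 1) choose n) * (pochhammer 1 k * pochhammer (- real n) k
           / pochhammer (2 * real n + 2) k * (-2) ^ k / fact k)
         = 2 ^ k * real ((3 * n + 1) choose (n - k))"
proof -
  define P where "P = pochhammer (real (n - k) + 1) k"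
  define Q where "Q = pochhammer (2 * real n + 2) k"
  have minus: "pochhammer (- real n) k = (-1) ^ k * P"
    using assms by (simp add: P_def pochhammer_minus of_nat_diff)
  have fn: "fact n = fact (n - k) * P"
    using fact_add_pochhammer[of "n - k" k, where 'a=real] assms by (simp add: P_def)
  have f2: "fact (2 * n + 1 + k) = fact (2 * n + 1) * Q"
    using fact_add_pochhammer[of "2 * n + 1" k, where 'a=real] by (simp add: Q_def add_ac)
  have binom:
    "real ((3 * n + 1) choose (n - j)) = fact (3 * n + 1) / (fact (n - j) * fact (2 * n + 1 + j))"
    if "j \<le> n" for j
  proof -
    have "3 * n + 1 - (n - j) = 2 * n + 1 + j" using that by simp
    then show ?thesis using binomial_fact[of "n - j" "3 * n + 1", where 'a=real] by simp
  qed
  have "Q \<noteq> 0" unfolding Q_def by (simp add: pochhammer_eq_0_iff)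
  moreover have "P \<noteq> 0" using fn by auto
  moreover have "real ((3 * n + 1) choose n) = fact (3 * n + 1) / (fact n * fact (2 * n + 1))"
    using binom[of 0] by (simp only: diff_zero add_0_right le0)
  ultimately have c: "real ((3 * n + 1) choose n) * P / Q = real ((3 * n + 1) choose (n - k))"
    unfolding binom[OF assms] fn f2 by (simp del: fact_Suc)
  have t: "pochhammer 1 k * pochhammer (- real n) k / Q * (-2) ^ k / fact k = 2 ^ k * P / Q"
    by (simp add: minus pochhammer_fact[symmetric] power_mult_distrib[symmetric])
  show ?thesis
    unfolding Q_def[symmetric] t c[symmetric] by simp
qed

lemma gauss_F_binomial_sum:
  "real ((3 * n + 1) choose n) * gauss_F 1 (- real n) (2 * real n + 2) (-2)
     = (\<Sum>i = 0..n. real ((3 * n + 1) choose i) * 2 ^ (n - i))"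
proof -
  let ?f = "\<lambda>k. pochhammer 1 k * pochhammer (- real n) k / pochhammer (2 * real n + 2) k
    * (-2) ^ k / fact k :: real"
  have "?f k = 0" if "k \<notin> {0..n}" for k
    using that by (simp add: pochhammer_of_nat_eq_0_lemma)
  then have "gauss_F 1 (- real n) (2 * real n + 2) (-2) = (\<Sum>k = 0..n. ?f k)"
    unfolding gauss_F_def by (intro suminf_finite) auto
  then have "real ((3 * n + 1) choose n) * gauss_F 1 (- real n) (2 * real n + 2) (-2)
      = (\<Sum>k = 0..n. real ((3 * n + 1) choose n) * ?f k)"
    by (simp only: sum_distrib_left)
  also have "\<dots> = (\<Sum>k = 0..n. 2 ^ k * real ((3 * n + 1) choose (n - k)))"
    by (intro sum.cong refl hypergeometric_term_binomial) simp
  also have "\<dots> = (\<Sum>i = 0..n. real ((3 * n + 1) choose i) * 2 ^ (n - i))"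
    by (subst sum.atLeastAtMost_rev) (simp add: mult.commute)
  finally show ?thesis .
qed

theorem proposition7:
  fixes n :: nat
  assumes "n \<ge> 1"
  shows "fps_nth A2 n =
    (real n + 1) / 128 * real ((3 * n + 1) choose n) *
    ((168 * real n ^ 3 + 846 * real n ^ 2 + 1211 * real n + 510) / 5
     - 3 * (real n + 1) * (25 * real n + 34)
       * gauss_F 1 (- real n) (2 * real n + 2) (-2))"
proof -
  have "640 * A2 $ n = real ((3 * n + 1) choose n)
        * (510 + 1721 * real n + 2057 * real n ^ 2 + 1014 * real n ^ 3 + 168 * real n ^ 4)
      - real ((3 * n + 1) choose n) * gauss_F 1 (- real n) (2 * real n + 2) (-2)
        * (510 + 1395 * real n + 1260 * real n ^ 2 + 375 * real n ^ 3)"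
    unfolding A2_nth gauss_F_binomial_sum ..
  then show ?thesis
    by (simp add: field_simps) algebra
qed

end
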